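(* Let $\mathcal{C}$ be a periodic cylinder of $\Phi$ of even period $2n$, with itinerary $i_0,\dots,i_{2n-1}$ (indices taken mod $2n$, so $i_{2n}=i_0$) and angle of departure $\hat\theta_0$. If $\mathcal{C}$ is $\lambda^-$-stable or $\lambda^+$-stable, then $$\hat\theta_0=\frac{1}{2n}\sum_{k=0}^{2n-1}(-1)^{k+1}k\,\beta_{i_k,i_{k+1}}.$$
   Context: Let $P$ be a simply connected polygon in $\mathbb{R}^2$ with $d$ sides, labeled $1,\dots,d$, with $\partial P$ oriented anticlockwise. The billiard map $\Phi$ acts on unit vectors $(x,v)$ with $x\in\partial P$ and $v$ pointing into $P$: $\Phi(x,v)=(\bar x,\bar v)$, where $\bar x$ is the first point at which the ray from $x$ in direction $v$ meets $\partial P$ and $\bar v$ is the inward vector obtained by reflecting $v$ in the side containing $\bar x$. Vectors based at vertices, and vectors whose image would be based at a vertex, are excluded; the remaining domain is $M'$. Points of $M'$ have coordinates $(s,\theta)$, $s$ the arc-length parameter of $x$ on $\partial P$, $\theta\in(-\pi/2,\pi/2)$ the oriented angle between $v$ and the inward normal at $x$. $\Sigma_{i,j}$ is the set of $(s,\theta)\in M'$ with $x$ on side $i$ and $\bar x$ on side $j$. $\beta_{i,j}$ denotes $\pi$ minus the angle formed by the oriented sides $i$ and $j$; for $(s,\theta)\in\Sigma_{i,j}$ the angle coordinate of $\Phi(s,\theta)$ is $\beta_{i,j}-\theta$. For $\lambda>0$ let $R_\lambda(s,\theta)=(s,\lambda\theta)$ and $\Phi_\lambda:=R_\lambda\circ\Phi$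 (pinball billiard map for $\lambda\neq1$). The itinerary of an orbit $(s_k,\theta_k)$ is the sequence $(i_k)$ with $(s_k,\theta_k)\in\Sigma_{i_k,i_{k+1}}$. Every periodic orbit of $\Phi$ lies in a periodic cylinder: a maximal one-parameter family of parallel periodic orbits of $\Phi$ with the same itinerary. For a cylinder of period $2n$ with itinerary $i_0,\dots,i_{2n-1}$, the angles of its orbits at the successive collisions are constants $\hat\theta_0,\dots,\hat\theta_{2n-1}$; $\hat\theta_0$ (the angle at side $i_0$) is the angle of departure. A periodic orbit $q$ of $\Phi$ is $\lambda^{+}$-stable (resp. $\lambda^-$-stable) if there exist a strictly decreasing (resp. strictly increasing) sequence $\lambda_n\to1$ and, for each $n$, a periodic orbit $q_n$ of $\Phi_{\lambda_n}$ with the same itinerary as $q$ such that $q_n\to q$. A periodic cylinder is $\lambda^\pm$-stable if it contains a $\lambda^\pm$-stable periodic orbit. *)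

theory Defs
  imports "HOL-Analysis.Analysis"
begin

text \<open>A polygon with d sides is given by its vertices p 0, ..., p (d-1) in the
  complex plane (= R^2).  Sides are labelled 0..d-1 (the paper uses 1..d):
  side i is the closed segment from p i to p (nxt d i).\<close>

definition nxt :: "nat \<Rightarrow> nat \<Rightarrow> nat" where
  "nxt d i = Suc i mod d"

definition side_seg :: "(nat \<Rightarrow> complex) \<Rightarrow> nat \<Rightarrow> nat \<Rightarrow> complex set" where
  "side_seg p d i = closed_segment (p i) (p (nxt d i))"

definition boundary_poly :: "(nat \<Rightarrow> complex) \<Rightarrow> nat \<Rightarrow> complex set" where
  "boundary_poly p d = (\<Union>i\<in>{..<d}. side_seg p d i)"

definition simple_polygon :: "(nat \<Rightarrow> complex) \<Rightarrow> nat \<Rightarrow> bool" where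
  "simple_polygon p d \<longleftrightarrow> 3 \<le> d \<and> inj_on p {..<d} \<and>
     (\<forall>i<d. \<forall>j<d. i \<noteq> j \<longrightarrow>
        side_seg p d i \<inter> side_seg p d j =
          (if j = nxt d i then {p j} else if i = nxt d j then {p i} else {}))"

text \<open>Anticlockwise orientation of the boundary: positive signed area.\<close>
definition anticlockwise :: "(nat \<Rightarrow> complex) \<Rightarrow> nat \<Rightarrow> bool" where
  "anticlockwise p d \<longleftrightarrow> (\<Sum>i<d. Im (cnj (p i) * p (nxt d i))) > 0"

definition side_len :: "(nat \<Rightarrow> complex) \<Rightarrow> nat \<Rightarrow> nat \<Rightarrow> real" where
  "side_len p d i = cmod (p (nxt d i) - p i)"

definition cum :: "(nat \<Rightarrow> complex) \<Rightarrow> nat \<Rightarrow> nat \<Rightarrow> real" where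
  "cum p d i = (\<Sum>j<i. side_len p d j)"

definition perimeter :: "(nat \<Rightarrow> complex) \<Rightarrow> nat \<Rightarrow> real" where
  "perimeter p d = cum p d d"

definition nonvertex :: "(nat \<Rightarrow> complex) \<Rightarrow> nat \<Rightarrow> real \<Rightarrow> bool" where
  "nonvertex p d s \<longleftrightarrow> 0 \<le> s \<and> s < perimeter p d \<and> (\<forall>i<d. s \<noteq> cum p d i)"

definition side_of :: "(nat \<Rightarrow> complex) \<Rightarrow> nat \<Rightarrow> real \<Rightarrow> nat" where
  "side_of p d s = (THE i. i < d \<and> cum p d i < s \<and> s < cum p d (Suc i))"

text \<open>Unit direction of the oriented side i, and the inward unit normal
  (rotation by +90 degrees: the interior lies to the left for an anticlockwise boundary).\<close>
definition udir :: "(nat \<Rightarrow> complex) \<Rightarrow> nat \<Rightarrow> nat \<Rightarrow> complex" where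
  "udir p d i = sgn (p (nxt d i) - p i)"

definition inormal :: "(nat \<Rightarrow> complex) \<Rightarrow> nat \<Rightarrow> nat \<Rightarrow> complex" where
  "inormal p d i = \<i> * udir p d i"

definition bpos :: "(nat \<Rightarrow> complex) \<Rightarrow> nat \<Rightarrow> real \<Rightarrow> complex" where
  "bpos p d s = p (side_of p d s) + of_real (s - cum p d (side_of p d s)) * udir p d (side_of p d s)"

text \<open>Unit vector at side i making oriented angle theta with the inward normal
  (theta is the angle by which v must be rotated anticlockwise to reach the normal).\<close>
definition vel :: "(nat \<Rightarrow> complex) \<Rightarrow> nat \<Rightarrow> nat \<Rightarrow> real \<Rightarrow> complex" where
  "vel p d i \<theta> = inormal p d i * cis (- \<theta>)"

text \<open>The image is based at the first point where the ray meets the boundary, and the new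
  velocity is the reflection of v in the side hit (reflection in a line with unit direction u
  is w \<mapsto> u^2 * cnj w).\<close>
definition billiard :: "(nat \<Rightarrow> complex) \<Rightarrow> nat \<Rightarrow> real \<times> real \<Rightarrow> real \<times> real \<Rightarrow> bool" where
  "billiard p d a b \<longleftrightarrow>
     (case a of (s, \<theta>) \<Rightarrow> case b of (s', \<theta>') \<Rightarrow>
       nonvertex p d s \<and> \<bar>\<theta>\<bar> < pi/2 \<and> nonvertex p d s' \<and> \<bar>\<theta>'\<bar> < pi/2 \<and>
       (let x = bpos p d s; v = vel p d (side_of p d s) \<theta>; u = udir p d (side_of p d s') in
         (\<exists>t>0. bpos p d s' = x + of_real t * v \<and>
                (\<forall>r. 0 < r \<and> r < t \<longrightarrow> x + of_real r * v \<notin> boundary_poly p d)) \<and>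
         vel p d (side_of p d s') \<theta>' = u^2 * cnj v))"

definition pinball :: "(nat \<Rightarrow> complex) \<Rightarrow> nat \<Rightarrow> real \<Rightarrow> real \<times> real \<Rightarrow> real \<times> real \<Rightarrow> bool" where
  "pinball p d lam a b \<longleftrightarrow> (\<exists>\<theta>'. billiard p d a (fst b, \<theta>') \<and> snd b = lam * \<theta>')"

definition is_orbit :: "(nat \<Rightarrow> complex) \<Rightarrow> nat \<Rightarrow> real \<Rightarrow> (nat \<Rightarrow> real \<times> real) \<Rightarrow> bool" where
  "is_orbit p d lam q \<longleftrightarrow> (\<forall>k. pinball p d lam (q k) (q (Suc k)))"

definition itinerary :: "(nat \<Rightarrow> complex) \<Rightarrow> nat \<Rightarrow> (nat \<Rightarrow> real \<times> real) \<Rightarrow> nat \<Rightarrow> nat" where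
  "itinerary p d q k = side_of p d (fst (q k))"

definition periodic_seq :: "(nat \<Rightarrow> 'a) \<Rightarrow> bool" where
  "periodic_seq q \<longleftrightarrow> (\<exists>m>0. \<forall>k. q (k + m) = q k)"

definition periodic_orbit :: "(nat \<Rightarrow> complex) \<Rightarrow> nat \<Rightarrow> real \<Rightarrow> (nat \<Rightarrow> real \<times> real) \<Rightarrow> bool" where
  "periodic_orbit p d lam q \<longleftrightarrow> 0 < lam \<and> is_orbit p d lam q \<and> periodic_seq q"

definition lambda_minus_stable :: "(nat \<Rightarrow> complex) \<Rightarrow> nat \<Rightarrow> (nat \<Rightarrow> real \<times> real) \<Rightarrow> bool" where
  "lambda_minus_stable p d q \<longleftrightarrow>
     (\<exists>lam qs. (\<forall>m. lam m < lam (Suc m)) \<and> lam \<longlonglongrightarrow> 1 \<and>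
        (\<forall>m. periodic_orbit p d (lam m) (qs m) \<and> itinerary p d (qs m) = itinerary p d q) \<and>
        (\<lambda>m. qs m 0) \<longlonglongrightarrow> q 0)"

definition lambda_plus_stable :: "(nat \<Rightarrow> complex) \<Rightarrow> nat \<Rightarrow> (nat \<Rightarrow> real \<times> real) \<Rightarrow> bool" where
  "lambda_plus_stable p d q \<longleftrightarrow>
     (\<exists>lam qs. (\<forall>m. lam (Suc m) < lam m) \<and> lam \<longlonglongrightarrow> 1 \<and>
        (\<forall>m. periodic_orbit p d (lam m) (qs m) \<and> itinerary p d (qs m) = itinerary p d q) \<and>
        (\<lambda>m. qs m 0) \<longlonglongrightarrow> q 0)"

definition side_angle :: "(nat \<Rightarrow> complex) \<Rightarrow> nat \<Rightarrow> nat \<Rightarrow> nat \<Rightarrow> real" where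
  "side_angle p d i j =
     (let a = Arg (udir p d j / udir p d i) in if a < 0 then a + 2 * pi else a)"

definition beta :: "(nat \<Rightarrow> complex) \<Rightarrow> nat \<Rightarrow> nat \<Rightarrow> nat \<Rightarrow> real" where
  "beta p d i j = pi - side_angle p d i j"

end

theory Submission
  imports Defs
begin

(*
  Along an orbit of the pinball map the angles obey theta_(k+1) = lambda (beta_k - theta_k),
  where beta_k = beta_(i_k, i_(k+1)) only depends on the itinerary; orientation and side
  lengths of the polygon play no further role.  Multiplying by (-1)^k solves the recurrence:
  (-1)^m theta_m = lambda^m theta_0 - sum_(k<m) (-1)^k beta_k lambda^(m-k).

  For lambda = 1 and the even period N = 2n this forces sum_(k<N) (-1)^k beta_k = 0.
  For lambda <> 1 the N-step map is affine with slope lambda^N <> 1, so a periodic orbit with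
  the given itinerary starts at its fixed point; by the vanishing alternating sum the factor
  1 - lambda cancels, leaving the polynomial identity
  (sum_(t<N) lambda^t) theta_0 = sum_(k<N) (-1)^k beta_k sum_(t<N-k) lambda^t.
  Letting lambda -> 1 along a stabilising sequence yields
  N theta_0 = sum_(k<N) (-1)^k (N - k) beta_k, which is the formula.
*)

lemma cum_mono: "i \<le> j \<Longrightarrow> cum p d i \<le> cum p d j"
  unfolding cum_def side_len_def by (rule sum_mono2) auto

lemma nonvertex_side_of_less:
  assumes "nonvertex p d s"
  shows "side_of p d s < d"
proof -
  from assms have s: "0 \<le> s" "s < cum p d d" "\<And>j. j < d \<Longrightarrow> s \<noteq> cum p d j"
    by (auto simp: nonvertex_def perimeter_def)
  then have "0 < d"
    by (cases d) (auto simp: cum_def)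
  define i where "i = (LEAST i. s < cum p d (Suc i))"
  have last_side: "s < cum p d (Suc (d - 1))"
    using s(2) \<open>0 < d\<close> by simp
  then have i_right: "s < cum p d (Suc i)"
    unfolding i_def by (rule LeastI)
  from last_side have "i \<le> d - 1"
    unfolding i_def by (rule Least_le)
  with \<open>0 < d\<close> have "i < d"
    by linarith
  have i_left: "cum p d i < s"
  proof (cases i)
    case 0
    then show ?thesis using s(1) s(3)[OF \<open>0 < d\<close>] by (auto simp: cum_def)
  next
    case (Suc j)
    then have "cum p d i \<le> s"
      using not_less_Least[of j "\<lambda>i. s < cum p d (Suc i)"] by (auto simp: i_def)
    with s(3)[OF \<open>i < d\<close>] show ?thesis by simp
  qed
  have "side_of p d s = i"
    unfolding side_of_def
  proof (rule the_equality)
    fix j assume j: "j < d \<and> cum p d j < s \<and> s < cum p d (Suc j)"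
    show "j = i"
    proof (rule ccontr)
      assume "j \<noteq> i"
      then have "Suc j \<le> i \<or> Suc i \<le> j"
        by linarith
      then have "cum p d (Suc j) \<le> cum p d i \<or> cum p d (Suc i) \<le> cum p d j"
        using cum_mono by blast
      with i_left i_right j show False by linarith
    qed
  qed (use \<open>i < d\<close> i_left i_right in blast)
  with \<open>i < d\<close> show ?thesis by simp
qed

lemma norm_udir:
  assumes "simple_polygon p d" "j < d"
  shows "norm (udir p d j) = 1"
proof -
  have "3 \<le> d" "inj_on p {..<d}"
    using assms(1) by (auto simp: simple_polygon_def)
  moreover have "nxt d j < d" "nxt d j \<noteq> j"
    using \<open>3 \<le> d\<close> assms(2) by (auto simp: nxt_def mod_if)
  ultimately have "p (nxt d j) \<noteq> p j"
    using assms(2) by (metis inj_onD lessThan_iff)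
  then show ?thesis
    by (simp add: udir_def norm_sgn)
qed

lemma reflected_direction_cis:
  fixes u u' :: complex
  assumes "norm u = 1" "norm u' = 1"
    and reflection: "\<i> * u' * cis (- \<theta>') = u'^2 * cnj (\<i> * u * cis (- \<theta>))"
  shows "cis (- \<theta>') = cis (pi + Arg (u' / u) + \<theta>)"
proof -
  have "u \<noteq> 0" "u' \<noteq> 0" "\<i> * u' \<noteq> 0"
    using assms(1,2) by auto
  have "\<i> * u' * cis (- \<theta>') = \<i> * u' * (- (u' * cnj u * cis \<theta>))"
    using reflection by (simp add: cis_cnj power2_eq_square algebra_simps)
  with \<open>\<i> * u' \<noteq> 0\<close> have "cis (- \<theta>') = - (u' * cnj u * cis \<theta>)"
    by (metis mult_left_cancel)
  moreover have "u' * cnj u = u' / u"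
    using complex_norm_square[of u] assms(1) \<open>u \<noteq> 0\<close> by (simp add: field_simps)
  moreover have "u' / u = cis (Arg (u' / u))"
    using assms(1,2) \<open>u \<noteq> 0\<close> \<open>u' \<noteq> 0\<close> by (simp add: cis_Arg sgn_div_norm norm_divide)
  ultimately show ?thesis
    by (simp add: cis_mult[symmetric])
qed

lemma side_angle_bounds: "0 \<le> side_angle p d i j" "side_angle p d i j < 2 * pi"
  using Arg_bounded[of "udir p d j / udir p d i"] by (auto simp: side_angle_def Let_def)

lemma cis_side_angle: "cis (side_angle p d i j) = cis (Arg (udir p d j / udir p d i))"
  by (simp add: side_angle_def Let_def cis_mult[symmetric])

lemma billiard_angle:
  assumes "simple_polygon p d" and "billiard p d (s, \<theta>) (s', \<theta>')"
  shows "\<theta>' = beta p d (side_of p d s) (side_of p d s') - \<theta>"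
proof -
  define a where "a = side_angle p d (side_of p d s) (side_of p d s')"
  from assms(2) have "nonvertex p d s" "nonvertex p d s'"
    and angle_bounds: "\<bar>\<theta>\<bar> < pi / 2" "\<bar>\<theta>'\<bar> < pi / 2"
    and reflection: "vel p d (side_of p d s') \<theta>'
      = (udir p d (side_of p d s'))^2 * cnj (vel p d (side_of p d s) \<theta>)"
    unfolding billiard_def Let_def by auto
  then have "cis (- \<theta>') = cis (pi + a + \<theta>)"
    using reflected_direction_cis[OF norm_udir norm_udir reflection[unfolded vel_def inormal_def]]
      assms(1) nonvertex_side_of_less
    by (simp add: a_def cis_side_angle cis_mult[symmetric])
  then obtain k :: int where k: "- \<theta>' = pi + a + \<theta> + 2 * pi * k"
    using sin_cos_eq_iff by (metis cis.sel)
  have "(2 * pi) * k < 0" "0 < (2 * pi) * (k + 2)"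
    using k side_angle_bounds[of p d "side_of p d s" "side_of p d s'"] angle_bounds
    by (auto simp: a_def abs_less_iff algebra_simps)
  then have "k < 0" "-2 < k"
    by (simp_all add: mult_less_0_iff zero_less_mult_iff)
  then have "k = -1"
    by linarith
  with k show ?thesis
    by (simp add: a_def beta_def)
qed

lemma pinball_orbit_angle_step:
  assumes "simple_polygon p d" and "is_orbit p d lam q"
  shows "snd (q (Suc k))
    = lam * (beta p d (itinerary p d q k) (itinerary p d q (Suc k)) - snd (q k))"
proof -
  obtain \<theta>' where "billiard p d (q k) (fst (q (Suc k)), \<theta>')" "snd (q (Suc k)) = lam * \<theta>'"
    using assms(2) unfolding is_orbit_def pinball_def by blast
  then show ?thesis
    using billiard_angle[OF assms(1), of "fst (q k)" "snd (q k)"] by (simp add: itinerary_def)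
qed

lemma periodic_add_mult:
  fixes P j :: nat
  assumes "\<And>k. f (k + P) = f k"
  shows "f (k + j * P) = f k"
proof (induction j)
  case (Suc j)
  have "k + Suc j * P = (k + j * P) + P" by simp
  with Suc.IH assms show ?case by metis
qed simp

lemma pinball_angles_closed_form:
  fixes y b :: "nat \<Rightarrow> real"
  assumes rec: "\<And>k. y (Suc k) = lam * (b k - y k)"
  shows "(-1) ^ m * y m = lam ^ m * y 0 - (\<Sum>k<m. (-1) ^ k * b k * lam ^ (m - k))"
proof (induction m)
  case (Suc m)
  have "(\<Sum>k<m. (-1) ^ k * b k * lam ^ (Suc m - k)) = lam * (\<Sum>k<m. (-1) ^ k * b k * lam ^ (m - k))"
    by (simp add: sum_distrib_left Suc_diff_le algebra_simps)
  then have "lam * (lam ^ m * y 0 - (\<Sum>k<m. (-1) ^ k * b k * lam ^ (m - k))) - (-1) ^ m * b m * lam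
      = lam ^ Suc m * y 0 - (\<Sum>k<Suc m. (-1) ^ k * b k * lam ^ (Suc m - k))"
    by (simp add: algebra_simps)
  moreover have "(-1) ^ Suc m * y (Suc m) = lam * ((-1) ^ m * y m) - (-1) ^ m * b m * lam"
    by (simp add: rec algebra_simps)
  ultimately show ?case
    by (simp only: Suc.IH)
qed simp

lemma affine_recurrence_periodic_fixpoint:
  fixes a :: "nat \<Rightarrow> 'a::field"
  assumes rec: "\<And>j. a (Suc j) = L * a j + C" and "a P = a 0" and "L ^ P \<noteq> 1"
  shows "(1 - L) * a 0 = C"
proof -
  have deviation: "(1 - L) * a j - C = L ^ j * ((1 - L) * a 0 - C)" for j
  proof (induction j)
    case (Suc j)
    have "(1 - L) * a (Suc j) - C = L * ((1 - L) * a j - C)"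
      by (simp add: rec algebra_simps)
    with Suc.IH show ?case by simp
  qed simp
  from deviation[of P] \<open>a P = a 0\<close> have "(1 - L ^ P) * ((1 - L) * a 0 - C) = 0"
    by (simp add: algebra_simps)
  with \<open>L ^ P \<noteq> 1\<close> show ?thesis by simp
qed

lemma pinball_angles_alternating_sum_eq_0:
  fixes y b :: "nat \<Rightarrow> real"
  assumes "\<And>k. y (Suc k) = b k - y k" and "y N = y 0" and "even N"
  shows "(\<Sum>k<N. (-1) ^ k * b k) = 0"
  using pinball_angles_closed_form[of y 1 b N] assms by simp

lemma periodic_pinball_angles_identity:
  fixes y b :: "nat \<Rightarrow> real"
  assumes rec: "\<And>k. y (Suc k) = lam * (b k - y k)"
    and b_period: "\<And>k. b (k + N) = b k" and y_period: "\<And>k. y (k + P) = y k"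
    and "even N" "0 < N" "0 < P" "0 < lam" "lam \<noteq> 1"
    and alternating: "(\<Sum>k<N. (-1) ^ k * b k) = 0"
  shows "(\<Sum>t<N. lam ^ t) * y 0 = (\<Sum>k<N. (-1) ^ k * b k * (\<Sum>t<N - k. lam ^ t))"
proof -
  define S where "S = (\<Sum>k<N. (-1) ^ k * b k * lam ^ (N - k))"
  have "y (j * N + N) = lam ^ N * y (j * N) - S" for j
    using pinball_angles_closed_form[of "\<lambda>k. y (j * N + k)" lam "\<lambda>k. b (j * N + k)" N]
      periodic_add_mult[of b N, OF b_period] \<open>even N\<close>
    by (simp add: rec S_def add.commute)
  moreover have "y (P * N) = y 0"
    using periodic_add_mult[of y P, OF y_period, of 0 N] by (simp add: mult.commute)
  moreover have "(lam ^ N) ^ P \<noteq> 1"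
    using power_eq_1_iff[of lam "N * P"] \<open>0 < N\<close> \<open>0 < P\<close> \<open>0 < lam\<close> \<open>lam \<noteq> 1\<close>
    by (auto simp: power_mult)
  ultimately have "(1 - lam ^ N) * y 0 = - S"
    using affine_recurrence_periodic_fixpoint[of "\<lambda>j. y (j * N)" "lam ^ N" "- S" P]
    by (simp add: algebra_simps)
  also have "\<dots> = (\<Sum>k<N. (-1) ^ k * b k) - S"
    by (simp add: alternating)
  also have "\<dots> = (\<Sum>k<N. (-1) ^ k * b k * (1 - lam ^ (N - k)))"
    by (simp add: S_def sum_subtractf[symmetric] algebra_simps)
  also have "\<dots> = (1 - lam) * (\<Sum>k<N. (-1) ^ k * b k * (\<Sum>t<N - k. lam ^ t))"
    by (simp add: one_diff_power_eq sum_distrib_left mult_ac)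
  finally show ?thesis
    using \<open>lam \<noteq> 1\<close> by (simp add: one_diff_power_eq)
qed

lemma periodic_pinball_angles_limit:
  fixes b :: "nat \<Rightarrow> real" and y :: "nat \<Rightarrow> nat \<Rightarrow> real" and lam :: "nat \<Rightarrow> real"
  assumes rec: "\<And>m k. y m (Suc k) = lam m * (b k - y m k)"
    and b_period: "\<And>k. b (k + N) = b k"
    and y_periodic: "\<And>m. \<exists>P>0. \<forall>k. y m (k + P) = y m k"
    and "even N" "0 < N" and lam_pos: "\<And>m. 0 < lam m" and lam_ne_1: "\<And>m. lam m \<noteq> 1"
    and lam_limit: "lam \<longlonglongrightarrow> 1" and start_limit: "(\<lambda>m. y m 0) \<longlonglongrightarrow> \<theta>"
    and alternating: "(\<Sum>k<N. (-1) ^ k * b k) = 0"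
  shows "\<theta> = (1 / real N) * (\<Sum>k<N. (-1) ^ (k + 1) * real k * b k)"
proof -
  define D where "D x = (\<Sum>t<N. x ^ t)" for x :: real
  define F where "F x = (\<Sum>k<N. (-1) ^ k * b k * (\<Sum>t<N - k. x ^ t))" for x :: real
  have "D (lam m) * y m 0 = F (lam m)" for m
  proof -
    obtain P where "0 < P" "\<And>k. y m (k + P) = y m k"
      using y_periodic by blast
    then show ?thesis
      unfolding D_def F_def
      by (intro periodic_pinball_angles_identity[of "y m" "lam m" b N P]
          rec b_period alternating lam_pos lam_ne_1 \<open>even N\<close> \<open>0 < N\<close>)
  qed
  moreover have "(\<lambda>m. D (lam m) * y m 0) \<longlonglongrightarrow> D 1 * \<theta>"
    unfolding D_def by (intro tendsto_intros lam_limit start_limit)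
  moreover have "(\<lambda>m. F (lam m)) \<longlonglongrightarrow> F 1"
    unfolding F_def by (intro tendsto_intros lam_limit)
  ultimately have "D 1 * \<theta> = F 1"
    using LIMSEQ_unique by simp
  also have "F 1 = (\<Sum>k<N. real N * ((-1) ^ k * b k) + (-1) ^ (k + 1) * real k * b k)"
    unfolding F_def by (intro sum.cong) (simp_all add: of_nat_diff algebra_simps)
  also have "\<dots> = real N * (\<Sum>k<N. (-1) ^ k * b k) + (\<Sum>k<N. (-1) ^ (k + 1) * real k * b k)"
    by (simp only: sum.distrib sum_distrib_left)
  also have "\<dots> = (\<Sum>k<N. (-1) ^ (k + 1) * real k * b k)"
    by (simp only: alternating mult_zero_right add_0_left)
  finally show ?thesis
    using \<open>0 < N\<close> by (simp add: D_def field_simps)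
qed

lemma LIMSEQ_strict_monotone_neq:
  fixes x :: "nat \<Rightarrow> 'a::linorder_topology"
  assumes "(\<forall>m. x m < x (Suc m)) \<or> (\<forall>m. x (Suc m) < x m)" and "x \<longlonglongrightarrow> l"
  shows "x m \<noteq> l"
  using assms(1)
proof
  assume increasing: "\<forall>m. x m < x (Suc m)"
  then have "incseq x"
    by (simp add: incseq_SucI less_imp_le)
  then have "x (Suc m) \<le> l"
    using assms(2) by (rule incseq_le)
  with increasing show ?thesis
    by (metis order_less_le_trans less_irrefl)
next
  assume decreasing: "\<forall>m. x (Suc m) < x m"
  then have "decseq x"
    by (simp add: decseq_SucI less_imp_le)
  then have "l \<le> x (Suc m)"
    using assms(2) by (rule decseq_ge)
  with decreasing show ?thesis
    by (metis order_le_less_trans less_irrefl)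
qed

lemma lambda_stable_approximating_orbits:
  assumes "lambda_minus_stable p d q \<or> lambda_plus_stable p d q"
  obtains lam qs where "\<And>m. lam m \<noteq> 1" "lam \<longlonglongrightarrow> 1"
    "\<And>m. periodic_orbit p d (lam m) (qs m)" "\<And>m. itinerary p d (qs m) = itinerary p d q"
    "(\<lambda>m. qs m 0) \<longlonglongrightarrow> q 0"
proof -
  obtain lam qs where monotone: "(\<forall>m. lam m < lam (Suc m)) \<or> (\<forall>m. lam (Suc m) < lam m)"
    and "lam \<longlonglongrightarrow> 1"
    and orbits: "\<forall>m. periodic_orbit p d (lam m) (qs m) \<and> itinerary p d (qs m) = itinerary p d q"
    and "(\<lambda>m. qs m 0) \<longlonglongrightarrow> q 0"
    using assms unfolding lambda_minus_stable_def lambda_plus_stable_def by blast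
  show thesis
  proof (rule that)
    show "lam m \<noteq> 1" for m
      using monotone \<open>lam \<longlonglongrightarrow> 1\<close> by (rule LIMSEQ_strict_monotone_neq)
  qed (use orbits \<open>lam \<longlonglongrightarrow> 1\<close> \<open>(\<lambda>m. qs m 0) \<longlonglongrightarrow> q 0\<close> in auto)
qed

theorem proposition3p2:
  fixes p :: "nat \<Rightarrow> complex" and d n :: nat
    and q :: "nat \<Rightarrow> real \<times> real" and i :: "nat \<Rightarrow> nat"
  assumes "simple_polygon p d" and "anticlockwise p d"
    and "n \<ge> 1"
    and "is_orbit p d 1 q" and "\<forall>k. q (k + 2 * n) = q k"
    and "itinerary p d q = i"
    and "lambda_minus_stable p d q \<or> lambda_plus_stable p d q"
  shows "snd (q 0) =
    (1 / (2 * real n)) * (\<Sum>k<2 * n. (-1) ^ (k + 1) * real k * beta p d (i k) (i (k + 1)))"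
proof -
  define b where "b k = beta p d (i k) (i (k + 1))" for k
  have angle_step: "snd (r (Suc k)) = lam * (b k - snd (r k))"
    if "is_orbit p d lam r" "itinerary p d r = i" for lam r k
    using pinball_orbit_angle_step[OF assms(1) that(1)] that(2) by (simp add: b_def)
  have i_period: "i (k + 2 * n) = i k" for k
    using assms(5,6) by (auto simp: itinerary_def)
  have b_period: "b (k + 2 * n) = b k" for k
    using i_period[of k] i_period[of "k + 1"] by (simp add: b_def)
  have alternating: "(\<Sum>k<2 * n. (-1) ^ k * b k) = 0"
    using pinball_angles_alternating_sum_eq_0[of "\<lambda>k. snd (q k)" b "2 * n"]
      angle_step[OF assms(4,6)] assms(5)[rule_format, of 0] by simp
  obtain lam qs where "\<And>m. lam m \<noteq> 1" "lam \<longlonglongrightarrow> 1"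
    and orbits: "\<And>m. periodic_orbit p d (lam m) (qs m)" "\<And>m. itinerary p d (qs m) = i"
    and "(\<lambda>m. qs m 0) \<longlonglongrightarrow> q 0"
    using lambda_stable_approximating_orbits[OF assms(7)] unfolding assms(6) by blast
  have "snd (q 0) = (1 / real (2 * n)) * (\<Sum>k<2 * n. (-1) ^ (k + 1) * real k * b k)"
  proof (rule periodic_pinball_angles_limit[where y = "\<lambda>m k. snd (qs m k)"])
    show "snd (qs m (Suc k)) = lam m * (b k - snd (qs m k))" for m k
      using orbits angle_step unfolding periodic_orbit_def by blast
    show "\<exists>P>0. \<forall>k. snd (qs m (k + P)) = snd (qs m k)" for m
      using orbits(1)[of m] unfolding periodic_orbit_def periodic_seq_def by metis
    show "0 < lam m" for m
      using orbits(1)[of m] unfolding periodic_orbit_def by blast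
    show "(\<lambda>m. snd (qs m 0)) \<longlonglongrightarrow> snd (q 0)"
      by (intro tendsto_snd) fact
  qed (use assms(3) b_period alternating \<open>\<And>m. lam m \<noteq> 1\<close> \<open>lam \<longlonglongrightarrow> 1\<close> in auto)
  then show ?thesis
    by (simp add: b_def)
qed

end
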